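(* Let $p_d:\mathbb R^n\to\mathbb R$ be a homogeneous polynomial of degree $d\ge2$ consisting only of non-separable monomials (i.e., every monomial appearing in $p_d$ with nonzero coefficient involves at least two distinct variables). Then $p_d$ is not convex. *)

theory Defs
  imports "HOL-Analysis.Analysis"
begin

text \<open>A real polynomial in the variables indexed by the finite type 'n is represented by
  its coefficient function c on exponent vectors alpha :: 'n => nat (finitely supported).\<close>

definition mpoly_support :: "(('n::finite \<Rightarrow> nat) \<Rightarrow> real) \<Rightarrow> ('n \<Rightarrow> nat) set" where
  "mpoly_support c = {\<alpha>. c \<alpha> \<noteq> 0}"

definition monomial_eval :: "('n::finite \<Rightarrow> nat) \<Rightarrow> real ^ 'n \<Rightarrow> real" where
  "monomial_eval \<alpha> x = (\<Prod>i\<in>UNIV. (x $ i) ^ (\<alpha> i))"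

definition mpoly_eval :: "(('n::finite \<Rightarrow> nat) \<Rightarrow> real) \<Rightarrow> real ^ 'n \<Rightarrow> real" where
  "mpoly_eval c x = (\<Sum>\<alpha>\<in>mpoly_support c. c \<alpha> * monomial_eval \<alpha> x)"

definition monomial_degree :: "('n::finite \<Rightarrow> nat) \<Rightarrow> nat" where
  "monomial_degree \<alpha> = (\<Sum>i\<in>UNIV. \<alpha> i)"

definition monomial_vars :: "('n::finite \<Rightarrow> nat) \<Rightarrow> 'n set" where
  "monomial_vars \<alpha> = {i. \<alpha> i \<noteq> 0}"

definition homogeneous_of_degree :: "(('n::finite \<Rightarrow> nat) \<Rightarrow> real) \<Rightarrow> nat \<Rightarrow> bool" where
  "homogeneous_of_degree c d \<longleftrightarrow> (\<forall>\<alpha>\<in>mpoly_support c. monomial_degree \<alpha> = d)"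

definition non_separable_monomial :: "('n::finite \<Rightarrow> nat) \<Rightarrow> bool" where
  "non_separable_monomial \<alpha> \<longleftrightarrow> card (monomial_vars \<alpha>) \<ge> 2"

end

theory Submission
  imports Defs
begin

text \<open>A non-separable polynomial p vanishes on the coordinate axes. If p were convex, Jensen's
  inequality for x as the barycentre of the points n x_i e_i (n the dimension) would give
  p x \<le> 0, while convexity on the segment from 0 to 2x together with p (2x) = 2^d p x gives
  p x \<le> 2^(d-1) p x, hence p x \<ge> 0 as d \<ge> 2. So p vanishes identically, and then so do
  all of its coefficients.\<close>

text \<open>The exponent vectors in S need only be told apart by their restriction to V; this lets
  the induction pass to the fibres of \<alpha> \<mapsto> \<alpha> v without reindexing.\<close>
lemma polyfun_vars_eq_0_imp_coeff_eq_0: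
  fixes c :: "('n \<Rightarrow> nat) \<Rightarrow> real"
  assumes "finite V" "finite S"
    and "\<And>\<alpha> \<beta>. \<alpha> \<in> S \<Longrightarrow> \<beta> \<in> S \<Longrightarrow> (\<And>i. i \<in> V \<Longrightarrow> \<alpha> i = \<beta> i) \<Longrightarrow> \<alpha> = \<beta>"
    and "\<And>x. (\<Sum>\<alpha>\<in>S. c \<alpha> * (\<Prod>i\<in>V. x i ^ \<alpha> i)) = 0"
    and "\<alpha> \<in> S"
  shows "c \<alpha> = 0"
  using assms
proof (induction V arbitrary: S rule: finite_induct)
  case empty
  then have "S = {\<alpha>}" by blast
  with empty.prems(3) show ?case by simp
next
  case (insert v V)
  obtain N where N: "\<And>\<beta>. \<beta> \<in> S \<Longrightarrow> \<beta> v \<le> N"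
    using insert.prems(1) finite_nat_set_iff_bounded_le[of "(\<lambda>\<beta>. \<beta> v) ` S"] by auto
  define g where "g k x = (\<Sum>\<beta>\<in>{\<beta>\<in>S. \<beta> v = k}. c \<beta> * (\<Prod>i\<in>V. x i ^ \<beta> i))" for k x
  have split: "(\<Sum>\<beta>\<in>S. c \<beta> * (\<Prod>i\<in>insert v V. x i ^ \<beta> i)) = (\<Sum>k\<le>N. g k x * x v ^ k)" for x
  proof -
    have "(\<Sum>\<beta>\<in>S. c \<beta> * (\<Prod>i\<in>insert v V. x i ^ \<beta> i))
        = (\<Sum>k\<le>N. \<Sum>\<beta>\<in>{\<beta>\<in>S. \<beta> v = k}. c \<beta> * (\<Prod>i\<in>insert v V. x i ^ \<beta> i))"
      using insert.prems(1) N by (intro sum.group[symmetric]) auto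
    also have "\<dots> = (\<Sum>k\<le>N. g k x * x v ^ k)"
      unfolding g_def sum_distrib_right
      by (intro sum.cong refl) (simp add: insert.hyps mult_ac)
    finally show ?thesis .
  qed
  have g_eq_0: "g k x = 0" if "k \<le> N" for k x
  proof -
    have "g k (x(v := t)) = g k x" for k t
      unfolding g_def using insert.hyps by (intro sum.cong refl) (auto intro!: prod.cong)
    then have "(\<Sum>k\<le>N. g k x * t ^ k) = 0" for t
      using insert.prems(3)[of "x(v := t)"] split[of "x(v := t)"] by simp
    then show ?thesis using polyfun_eq_0[of "\<lambda>k. g k x" N] that by blast
  qed
  show ?case
  proof (rule insert.IH[of "{\<beta>\<in>S. \<beta> v = \<alpha> v}"])
    show "(\<Sum>\<beta>\<in>{\<beta>\<in>S. \<beta> v = \<alpha> v}. c \<beta> * (\<Prod>i\<in>V. x i ^ \<beta> i)) = 0" for x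
      using g_eq_0[of "\<alpha> v" x] N[OF insert.prems(4)] by (simp add: g_def)
    show "\<beta> = \<gamma>" if "\<beta> \<in> {\<beta>\<in>S. \<beta> v = \<alpha> v}" "\<gamma> \<in> {\<beta>\<in>S. \<beta> v = \<alpha> v}"
      and "\<And>i. i \<in> V \<Longrightarrow> \<beta> i = \<gamma> i" for \<beta> \<gamma>
      using that by (intro insert.prems(2)) auto
  qed (use insert.prems in auto)
qed

lemma mpoly_support_eq_empty_if_mpoly_eval_eq_0:
  assumes "finite (mpoly_support c)" "\<And>x. mpoly_eval c x = 0"
  shows "mpoly_support c = {}"
proof -
  have "c \<alpha> = 0" if "\<alpha> \<in> mpoly_support c" for \<alpha>
  proof (rule polyfun_vars_eq_0_imp_coeff_eq_0[OF finite_class.finite_UNIV assms(1) _ _ that])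
    show "(\<Sum>\<alpha>\<in>mpoly_support c. c \<alpha> * (\<Prod>i\<in>UNIV. x i ^ \<alpha> i)) = 0" for x
      using assms(2)[of "vec_lambda x"] by (simp add: mpoly_eval_def monomial_eval_def)
  qed auto
  then show ?thesis by (auto simp: mpoly_support_def)
qed

lemma monomial_eval_scaleR:
  "monomial_eval \<alpha> (t *\<^sub>R x) = t ^ monomial_degree \<alpha> * monomial_eval \<alpha> x"
  by (simp add: monomial_eval_def monomial_degree_def power_mult_distrib prod.distrib power_sum)

lemma mpoly_eval_scaleR:
  assumes "homogeneous_of_degree c d"
  shows "mpoly_eval c (t *\<^sub>R x) = t ^ d * mpoly_eval c x"
  using assms unfolding mpoly_eval_def homogeneous_of_degree_def sum_distrib_left
  by (intro sum.cong refl) (simp add: monomial_eval_scaleR)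

lemma monomial_eval_axis:
  assumes "non_separable_monomial \<alpha>"
  shows "monomial_eval \<alpha> (axis i s) = 0"
proof -
  have "\<not> monomial_vars \<alpha> \<subseteq> {i}"
    using assms card_mono[of "{i}" "monomial_vars \<alpha>"] by (auto simp: non_separable_monomial_def)
  then obtain j where "\<alpha> j \<noteq> 0" "j \<noteq> i" by (auto simp: monomial_vars_def)
  then have "axis i s $ j ^ \<alpha> j = 0" by (simp add: axis_def)
  then show ?thesis unfolding monomial_eval_def by (intro prod_zero) auto
qed

lemma mpoly_eval_axis:
  assumes "\<forall>\<alpha>\<in>mpoly_support c. non_separable_monomial \<alpha>"
  shows "mpoly_eval c (axis i s) = 0"
  using assms by (simp add: mpoly_eval_def monomial_eval_axis)

lemma convex_on_nonpos_if_vanishes_on_axes: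
  fixes f :: "real ^ 'n \<Rightarrow> real"
  assumes "convex_on UNIV f" "\<And>i s. f (axis i s) = 0"
  shows "f x \<le> 0"
proof -
  define n where "n = real CARD('n)"
  have "n > 0" by (simp add: n_def)
  have "x = (\<Sum>i\<in>UNIV. (1 / n) *\<^sub>R axis i (n * x $ i))"
    using \<open>n > 0\<close> by (simp add: vec_eq_iff axis_def if_distrib sum.If_cases)
  also have "f \<dots> \<le> (\<Sum>i\<in>UNIV. (1 / n) * f (axis i (n * x $ i)))"
    using \<open>n > 0\<close> by (intro convex_on_sum[OF _ _ assms(1)]) (auto simp: n_def)
  finally show ?thesis by (simp add: assms(2))
qed

lemma convex_on_homogeneous_nonneg:
  fixes f :: "'a::real_vector \<Rightarrow> real"
  assumes "convex_on UNIV f" "\<And>t x. f (t *\<^sub>R x) = t ^ d * f x" "d \<ge> 2"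
  shows "f x \<ge> 0"
proof -
  have "f x = f ((1 - 1/2) *\<^sub>R 0 + (1/2) *\<^sub>R (2 *\<^sub>R x))" by simp
  also have "\<dots> \<le> (1 - 1/2) * f 0 + (1/2) * f (2 *\<^sub>R x)"
    by (rule convex_onD[OF assms(1)]) auto
  also have "\<dots> = 2 ^ d / 2 * f x"
    using assms(2)[of 0 x] assms(2)[of 2 x] \<open>d \<ge> 2\<close> by simp
  finally have "0 \<le> (2 ^ d / 2 - 1) * f x" by (simp add: algebra_simps)
  moreover have "(2::real) ^ d / 2 - 1 > 0"
    using power_increasing[of 2 d "2::real"] \<open>d \<ge> 2\<close> by simp
  ultimately show ?thesis by (simp add: zero_le_mult_iff)
qed

theorem lemma3:
  fixes c :: "('n::finite \<Rightarrow> nat) \<Rightarrow> real" and d :: nat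
  assumes "finite (mpoly_support c)"
    and "mpoly_support c \<noteq> {}"
    and "d \<ge> 2"
    and "homogeneous_of_degree c d"
    and "\<forall>\<alpha>\<in>mpoly_support c. non_separable_monomial \<alpha>"
  shows "\<not> convex_on UNIV (mpoly_eval c)"
proof
  assume convex: "convex_on UNIV (mpoly_eval c)"
  have "mpoly_eval c x = 0" for x
  proof (rule antisym)
    show "mpoly_eval c x \<le> 0"
      using convex_on_nonpos_if_vanishes_on_axes[OF convex mpoly_eval_axis[OF assms(5)]] .
    show "0 \<le> mpoly_eval c x"
      using convex_on_homogeneous_nonneg[OF convex mpoly_eval_scaleR[OF assms(4)] assms(3)] .
  qed
  then have "mpoly_support c = {}"
    using assms(1) mpoly_support_eq_empty_if_mpoly_eval_eq_0 by blast
  with assms(2) show False ..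
qed

end
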